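(* Let $F$ and $G$ be finite graphs, let $n=v(G)$, and let $W_G$ be a graphon representation of $G$. Then $\mathsf{fcov}(F,G)=n\cdot\mathsf{fcov}(F,W_G)$.
   Context: $(\Omega,\nu)$ is an atomless Borel probability space; a graphon is a symmetric measurable $W:\Omega^2\to[0,1]$. Let $F$ have vertex set $[k]$. For a finite graph $G$, $\mathcal{F}_F(G)=\{(u_1,\dots,u_k)\in V(G)^k:u_iu_j\in E(G)\text{ for each }ij\in E(F)\}$. A fractional $F$-cover of $G$ is $\mathfrak{c}:V(G)\to[0,1]$ with $\sum_{i=1}^k\mathfrak{c}(u_i)\ge1$ for each $(u_1,\dots,u_k)\in\mathcal{F}_F(G)$; its size is $\sum_v\mathfrak{c}(v)$, and $\mathsf{fcov}(F,G)$ is the minimum size. A graphon representation $W_G$ of $G$ with $V(G)=\{v_1,\dots,v_n\}$: partition $\Omega$ into measurable sets $\Omega_1,\dots,\Omega_n$ of measure $1/n$ and let $W_G=1$ on $\Omega_i\times\Omega_j$ if $v_iv_j\in E(G)$, $0$ otherwise. For a graphon $W$, $W^{\otimes F}(x_1,\dots,x_k)=\prod_{ij\in E(F),i<j}W(x_i,x_j)$ and $\mathcal{F}_F(W)=\{W^{\otimes F}\neq0\}$. A fractional $F$-cover of $W$ is a measurable $\mathfrak{c}:\Omega\to[0,1]$ with $\nu^k\big(\mathcal{F}_F(W)\cap\{(x_1,\dots,x_k):\sum_{i=1}^k\mathfrak{c}(x_i)<1\}\big)=0$; its size is $\int\mathfrak{c}\,\mathrm{d}\nu$, and $\mathsf{fcov}(F,W)$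 is the infimum of sizes. *)

theory Defs
  imports "HOL-Probability.Probability"
begin

text \<open>Graphs: a finite simple graph on vertex set V is given by a symmetric irreflexive
  edge relation E with edges inside V.  The pattern graph F has vertex set {0..<k}.\<close>

definition simple_graph :: "'v set \<Rightarrow> ('v \<Rightarrow> 'v \<Rightarrow> bool) \<Rightarrow> bool" where
  "simple_graph V E \<longleftrightarrow> finite V \<and> (\<forall>u v. E u v \<longrightarrow> u \<in> V \<and> v \<in> V)
     \<and> (\<forall>u v. E u v \<longrightarrow> E v u) \<and> (\<forall>v. \<not> E v v)"

definition hom_tuples :: "nat \<Rightarrow> (nat \<Rightarrow> nat \<Rightarrow> bool) \<Rightarrow> 'v set \<Rightarrow> ('v \<Rightarrow> 'v \<Rightarrow> bool)
    \<Rightarrow> (nat \<Rightarrow> 'v) set" where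
  "hom_tuples k EF V E = {u \<in> {0..<k} \<rightarrow>\<^sub>E V. \<forall>i<k. \<forall>j<k. EF i j \<longrightarrow> E (u i) (u j)}"

definition is_frac_cover_graph :: "nat \<Rightarrow> (nat \<Rightarrow> nat \<Rightarrow> bool) \<Rightarrow> 'v set \<Rightarrow> ('v \<Rightarrow> 'v \<Rightarrow> bool)
    \<Rightarrow> ('v \<Rightarrow> real) \<Rightarrow> bool" where
  "is_frac_cover_graph k EF V E c \<longleftrightarrow> (\<forall>v\<in>V. 0 \<le> c v \<and> c v \<le> 1)
     \<and> (\<forall>u\<in>hom_tuples k EF V E. (\<Sum>i<k. c (u i)) \<ge> 1)"

text \<open>fcov(F,G): minimum (infimum; +infinity if no cover exists) size of a fractional F-cover.\<close>
definition fcov_graph :: "nat \<Rightarrow> (nat \<Rightarrow> nat \<Rightarrow> bool) \<Rightarrow> 'v set \<Rightarrow> ('v \<Rightarrow> 'v \<Rightarrow> bool) \<Rightarrow> ereal" where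
  "fcov_graph k EF V E = Inf {ereal (\<Sum>v\<in>V. c v) | c. is_frac_cover_graph k EF V E c}"

definition atomless :: "'a measure \<Rightarrow> bool" where
  "atomless M \<longleftrightarrow> (\<forall>A\<in>sets M. emeasure M A > 0 \<longrightarrow>
     (\<exists>B\<in>sets M. B \<subseteq> A \<and> 0 < emeasure M B \<and> emeasure M B < emeasure M A))"

definition is_graphon :: "'a measure \<Rightarrow> ('a \<Rightarrow> 'a \<Rightarrow> real) \<Rightarrow> bool" where
  "is_graphon M W \<longleftrightarrow> (\<forall>x\<in>space M. \<forall>y\<in>space M. W x y = W y x \<and> 0 \<le> W x y \<and> W x y \<le> 1)
     \<and> (\<lambda>(x, y). W x y) \<in> borel_measurable (M \<Otimes>\<^sub>M M)"

definition graphon_tensor :: "nat \<Rightarrow> (nat \<Rightarrow> nat \<Rightarrow> bool) \<Rightarrow> ('a \<Rightarrow> 'a \<Rightarrow> real) \<Rightarrow> (nat \<Rightarrow> 'a) \<Rightarrow> real" where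
  "graphon_tensor k EF W x = (\<Prod>(i, j)\<in>{(i, j). i < j \<and> j < k \<and> EF i j}. W (x i) (x j))"

definition hom_set_graphon :: "'a measure \<Rightarrow> nat \<Rightarrow> (nat \<Rightarrow> nat \<Rightarrow> bool) \<Rightarrow> ('a \<Rightarrow> 'a \<Rightarrow> real)
    \<Rightarrow> (nat \<Rightarrow> 'a) set" where
  "hom_set_graphon M k EF W = {x \<in> space (PiM {0..<k} (\<lambda>_. M)). graphon_tensor k EF W x \<noteq> 0}"

definition is_frac_cover_graphon :: "'a measure \<Rightarrow> nat \<Rightarrow> (nat \<Rightarrow> nat \<Rightarrow> bool) \<Rightarrow> ('a \<Rightarrow> 'a \<Rightarrow> real)
    \<Rightarrow> ('a \<Rightarrow> real) \<Rightarrow> bool" where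
  "is_frac_cover_graphon M k EF W c \<longleftrightarrow> c \<in> borel_measurable M
     \<and> (\<forall>x\<in>space M. 0 \<le> c x \<and> c x \<le> 1)
     \<and> hom_set_graphon M k EF W \<inter> {x \<in> space (PiM {0..<k} (\<lambda>_. M)). (\<Sum>i<k. c (x i)) < 1}
         \<in> null_sets (PiM {0..<k} (\<lambda>_. M))"

definition fcov_graphon :: "'a measure \<Rightarrow> nat \<Rightarrow> (nat \<Rightarrow> nat \<Rightarrow> bool) \<Rightarrow> ('a \<Rightarrow> 'a \<Rightarrow> real) \<Rightarrow> ereal" where
  "fcov_graphon M k EF W = Inf {ereal (integral\<^sup>L M c) | c. is_frac_cover_graphon M k EF W c}"

definition is_vertex_partition :: "'a measure \<Rightarrow> 'v set \<Rightarrow> ('v \<Rightarrow> 'a set) \<Rightarrow> bool" where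
  "is_vertex_partition M V P \<longleftrightarrow> (\<forall>v\<in>V. P v \<in> sets M \<and> measure M (P v) = 1 / real (card V))
     \<and> disjoint_family_on P V \<and> (\<Union>v\<in>V. P v) = space M"

definition graphon_rep :: "'v set \<Rightarrow> ('v \<Rightarrow> 'v \<Rightarrow> bool) \<Rightarrow> ('v \<Rightarrow> 'a set) \<Rightarrow> 'a \<Rightarrow> 'a \<Rightarrow> real" where
  "graphon_rep V E P x y = (if \<exists>v\<in>V. \<exists>w\<in>V. x \<in> P v \<and> y \<in> P w \<and> E v w then 1 else 0)"

end

theory Submission
  imports Defs
begin

text \<open>A fractional F-cover of G lifts to the step function that is constant on the cells of the
  partition, and its integral is its size divided by n.  Conversely, averaging a fractional cover
  c of W_G over each cell gives a vertex weighting of n times its integral.  This weighting is a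
  cover: for a copy u of F in G, the set of points of each cell P(u i) where c lies below its
  average has positive measure, so the product of these sets has positive measure and meets the
  full-measure set of tuples covered by c; every tuple of this product is a copy of F in W_G.\<close>

definition vertex_of :: "'v set \<Rightarrow> ('v \<Rightarrow> 'a set) \<Rightarrow> 'a \<Rightarrow> 'v" where
  "vertex_of V P x = (THE v. v \<in> V \<and> x \<in> P v)"

definition step_function :: "'v set \<Rightarrow> ('v \<Rightarrow> 'a set) \<Rightarrow> ('v \<Rightarrow> real) \<Rightarrow> 'a \<Rightarrow> real" where
  "step_function V P c x = (\<Sum>v\<in>V. c v * indicator (P v) x)"

definition cell_average :: "'a measure \<Rightarrow> ('v \<Rightarrow> 'a set) \<Rightarrow> ('a \<Rightarrow> real) \<Rightarrow> 'v \<Rightarrow> real" where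
  "cell_average M P c v = (LINT x:P v|M. c x) / measure M (P v)"

lemma vertex_partitionD:
  assumes "is_vertex_partition M V P"
  shows "\<And>v. v \<in> V \<Longrightarrow> P v \<in> sets M"
    and "\<And>v. v \<in> V \<Longrightarrow> measure M (P v) = 1 / real (card V)"
    and "disjoint_family_on P V"
    and "(\<Union>v\<in>V. P v) = space M"
  using assms unfolding is_vertex_partition_def by auto

lemma card_vertex_partition_pos:
  assumes "prob_space M" "is_vertex_partition M V P" "finite V"
  shows "card V > 0"
proof -
  have "space M \<noteq> {}" using assms(1) prob_space.not_empty by blast
  then have "V \<noteq> {}" using vertex_partitionD(4)[OF assms(2)] by auto
  then show ?thesis using assms(3) by (simp add: card_gt_0_iff)
qed

lemma vertex_of_eq:
  assumes "disjoint_family_on P V" "v \<in> V" "x \<in> P v"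
  shows "vertex_of V P x = v"
  unfolding vertex_of_def
  using assms by (intro the_equality) (auto simp: disjoint_family_on_def)

lemma vertex_of_mem:
  assumes "is_vertex_partition M V P" "x \<in> space M"
  shows "vertex_of V P x \<in> V" and "x \<in> P (vertex_of V P x)"
proof -
  obtain v where "v \<in> V" "x \<in> P v" using vertex_partitionD(4)[OF assms(1)] assms(2) by blast
  moreover have "vertex_of V P x = v"
    using vertex_of_eq[OF vertex_partitionD(3)[OF assms(1)]] calculation by blast
  ultimately show "vertex_of V P x \<in> V" "x \<in> P (vertex_of V P x)" by simp_all
qed

lemma step_function_eq:
  assumes "finite V" "disjoint_family_on P V" "v \<in> V" "x \<in> P v"
  shows "step_function V P c x = c v"
proof -
  have "step_function V P c x = (\<Sum>w\<in>V. if w = v then c v else 0)"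
    unfolding step_function_def using assms(2-4)
    by (intro sum.cong) (auto simp: indicator_def disjoint_family_on_def)
  also have "\<dots> = c v" using assms(1,3) by simp
  finally show ?thesis .
qed

lemma integral_step_function:
  assumes "finite_measure M" "finite V" "\<And>v. v \<in> V \<Longrightarrow> P v \<in> sets M"
  shows "integral\<^sup>L M (step_function V P c) = (\<Sum>v\<in>V. c v * measure M (P v))"
proof -
  interpret finite_measure M by fact
  show ?thesis
    unfolding step_function_def using assms(2,3)
    by (subst Bochner_Integration.integral_sum) (auto simp: emeasure_eq_measure)
qed

lemma card_mult_integral_step_function:
  assumes "prob_space M" "is_vertex_partition M V P" "finite V"
  shows "real (card V) * integral\<^sup>L M (step_function V P c) = (\<Sum>v\<in>V. c v)"
proof -
  have "integral\<^sup>L M (step_function V P c) = (\<Sum>v\<in>V. c v / real (card V))"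
    using integral_step_function[OF prob_space.finite_measure[OF assms(1)] assms(3)]
      vertex_partitionD(1,2)[OF assms(2)] by simp
  then show ?thesis
    using card_vertex_partition_pos[OF assms] by (simp add: sum_divide_distrib[symmetric])
qed

lemma cell_average_vertex_partition:
  assumes "is_vertex_partition M V P" "v \<in> V"
  shows "cell_average M P c v = real (card V) * (LINT x:P v|M. c x)"
  unfolding cell_average_def vertex_partitionD(2)[OF assms] by simp

lemma sum_cell_average_vertex_partition:
  assumes "prob_space M" "is_vertex_partition M V P" "finite V" "integrable M c"
  shows "(\<Sum>v\<in>V. cell_average M P c v) = real (card V) * integral\<^sup>L M c"
proof -
  note P = vertex_partitionD[OF assms(2)]
  have "set_integrable M (P v) c" if "v \<in> V" for v
    unfolding set_integrable_def using P(1)[OF that] assms(4) by (rule integrable_mult_indicator)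
  moreover have "v = w" if "v \<in> V" "w \<in> V" "x \<in> P v" "x \<in> P w" for v w x
    using P(3) that unfolding disjoint_family_on_def by blast
  ultimately have "(\<Sum>v\<in>V. LINT x:P v|M. c x) = (LINT x:(\<Union>v\<in>V. P v)|M. c x)"
    using P(1) assms(3) by (intro set_integral_finite_UN_AE[symmetric] AE_I2) auto
  also have "\<dots> = integral\<^sup>L M c"
    unfolding P(4) using assms(4) by (rule set_integral_space)
  finally show ?thesis
    using cell_average_vertex_partition[OF assms(2)] by (simp add: sum_distrib_left[symmetric])
qed

lemma (in finite_measure) set_average_bounds:
  fixes c :: "'a \<Rightarrow> real"
  assumes "c \<in> borel_measurable M" "\<And>x. x \<in> space M \<Longrightarrow> 0 \<le> c x \<and> c x \<le> 1" "A \<in> sets M"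
  shows "0 \<le> (LINT x:A|M. c x) / measure M A \<and> (LINT x:A|M. c x) / measure M A \<le> 1"
proof -
  have "integrable M c"
    using assms(1,2) by (intro integrable_const_bound[where B=1]) auto
  then have int: "integrable M (\<lambda>x. indicator A x * c x)"
    using integrable_mult_indicator[OF assms(3)] by fastforce
  have "0 \<le> (LINT x|M. indicator A x * c x)"
    using assms(2) by (intro Bochner_Integration.integral_nonneg) (simp add: indicator_def)
  moreover have "(LINT x|M. indicator A x * c x) \<le> (LINT x|M. indicator A x)"
    using assms(2,3) int
    by (intro Bochner_Integration.integral_mono integrable_real_indicator)
      (auto simp: indicator_def emeasure_eq_measure)
  ultimately show ?thesis
    using assms(3) by (auto simp: set_lebesgue_integral_def emeasure_eq_measure divide_le_eq_1)
qed

lemma (in finite_measure) emeasure_le_set_average_nonzero: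
  fixes f :: "'a \<Rightarrow> real"
  assumes f: "integrable M f" and A: "A \<in> sets M" "emeasure M A \<noteq> 0"
  defines "a \<equiv> (LINT x:A|M. f x) / measure M A"
  shows "emeasure M {x \<in> A. f x \<le> a} \<noteq> 0"
proof
  assume "emeasure M {x \<in> A. f x \<le> a} = 0"
  moreover have "{x \<in> A. f x \<le> a} \<in> sets M"
    using A f by measurable
  ultimately have "AE x in M. x \<notin> {x \<in> A. f x \<le> a}"
    by (intro AE_not_in) (simp add: null_sets_def)
  then have above: "AE x in M. x \<in> A \<longrightarrow> a < f x"
    by eventually_elim auto
  have "(LINT x|M. indicator A x * a) < (LINT x|M. indicator A x * f x)"
    using A above f
    by (intro integral_less_AE[where A=A])
      (auto simp: emeasure_eq_measure integrable_mult_indicator[OF A(1) f, simplified]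
        elim!: eventually_mono split: split_indicator)
  moreover have "measure M A \<noteq> 0" using A(2) by (simp add: emeasure_eq_measure)
  ultimately show False
    using A(1) by (simp add: a_def set_lebesgue_integral_def emeasure_eq_measure)
qed

lemma PiE_not_null_sets:
  assumes "sigma_finite_measure M" "finite I"
    and "\<And>i. i \<in> I \<Longrightarrow> A i \<in> sets M" "\<And>i. i \<in> I \<Longrightarrow> emeasure M (A i) \<noteq> 0"
  shows "PiE I A \<notin> null_sets (PiM I (\<lambda>_. M))"
proof -
  interpret product_sigma_finite "\<lambda>_. M"
    using assms(1) by (simp add: product_sigma_finite_def)
  have "emeasure (PiM I (\<lambda>_. M)) (PiE I A) = (\<Prod>i\<in>I. emeasure M (A i))"
    using assms(2,3) by (rule emeasure_PiM)
  also have "\<dots> \<noteq> 0" using assms(2,4) by simp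
  finally show ?thesis by (simp add: null_sets_def)
qed

lemma hom_tuples_if_ordered_edges:
  assumes "simple_graph {0..<k} EF" "simple_graph V E" "u \<in> {0..<k} \<rightarrow>\<^sub>E V"
    and "\<And>i j. i < j \<Longrightarrow> j < k \<Longrightarrow> EF i j \<Longrightarrow> E (u i) (u j)"
  shows "u \<in> hom_tuples k EF V E"
proof -
  have "E (u i) (u j)" if "i < k" "j < k" "EF i j" for i j
  proof (cases i j rule: linorder_cases)
    case equal
    then show ?thesis using assms(1) that(3) by (simp add: simple_graph_def)
  next
    case greater
    then have "E (u j) (u i)" using assms(1,4) that by (simp add: simple_graph_def)
    then show ?thesis using assms(2) by (simp add: simple_graph_def)
  qed (use assms(4) that in blast)
  then show ?thesis using assms(3) unfolding hom_tuples_def by auto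
qed

lemma graphon_rep_nonzero_imp_edge:
  assumes "disjoint_family_on P V" "graphon_rep V E P x y \<noteq> 0"
  shows "E (vertex_of V P x) (vertex_of V P y)"
  using assms vertex_of_eq[OF assms(1)] by (auto simp: graphon_rep_def split: if_splits)

lemma graphon_tensor_nonzero_imp_factor:
  assumes "graphon_tensor k EF W x \<noteq> 0" "i < j" "j < k" "EF i j"
  shows "W (x i) (x j) \<noteq> 0"
proof -
  have "finite {(i, j). i < j \<and> j < k \<and> EF i j}"
    by (rule finite_subset[of _ "{..<k} \<times> {..<k}"]) auto
  then show ?thesis using assms unfolding graphon_tensor_def by (auto simp: prod_zero_iff)
qed

lemma hom_tuple_vertex_of:
  assumes "simple_graph {0..<k} EF" "simple_graph V E" "is_vertex_partition M V P"
    and "x \<in> space (PiM {0..<k} (\<lambda>_. M))" "graphon_tensor k EF (graphon_rep V E P) x \<noteq> 0"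
  shows "(\<lambda>i\<in>{0..<k}. vertex_of V P (x i)) \<in> hom_tuples k EF V E"
proof (rule hom_tuples_if_ordered_edges[OF assms(1,2)])
  show "(\<lambda>i\<in>{0..<k}. vertex_of V P (x i)) \<in> {0..<k} \<rightarrow>\<^sub>E V"
    using assms(4) vertex_of_mem(1)[OF assms(3)] by (auto simp: space_PiM)
  show "E ((\<lambda>i\<in>{0..<k}. vertex_of V P (x i)) i) ((\<lambda>i\<in>{0..<k}. vertex_of V P (x i)) j)"
    if "i < j" "j < k" "EF i j" for i j
    using graphon_rep_nonzero_imp_edge[OF vertex_partitionD(3)[OF assms(3)]
        graphon_tensor_nonzero_imp_factor[OF assms(5) that]] that by simp
qed

lemma graphon_tensor_graphon_rep_eq_1:
  assumes "u \<in> hom_tuples k EF V E" "\<And>i. i < k \<Longrightarrow> x i \<in> P (u i)"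
  shows "graphon_tensor k EF (graphon_rep V E P) x = 1"
  unfolding graphon_tensor_def
proof (rule prod.neutral, clarify)
  fix i j assume ij: "i < j" "j < k" "EF i j"
  then have "u i \<in> V" "u j \<in> V" "E (u i) (u j)"
    using assms(1) unfolding hom_tuples_def by auto
  moreover have "x i \<in> P (u i)" "x j \<in> P (u j)"
    using assms(2) ij by auto
  ultimately show "graphon_rep V E P (x i) (x j) = 1"
    unfolding graphon_rep_def by (subst if_P) blast+
qed

lemma frac_cover_graphon_step_function:
  assumes "simple_graph {0..<k} EF" "simple_graph V E" "is_vertex_partition M V P"
    and cover: "is_frac_cover_graph k EF V E c"
  shows "is_frac_cover_graphon M k EF (graphon_rep V E P) (step_function V P c)"
proof -
  note P = vertex_partitionD[OF assms(3)]
  have fin: "finite V" using assms(2) by (simp add: simple_graph_def)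
  have at_point: "step_function V P c x = c (vertex_of V P x)" if "x \<in> space M" for x
    using step_function_eq[OF fin P(3)] vertex_of_mem[OF assms(3) that] by simp
  have covered: "(\<Sum>i<k. step_function V P c (x i)) \<ge> 1"
    if "x \<in> hom_set_graphon M k EF (graphon_rep V E P)" for x
  proof -
    have x: "x \<in> space (PiM {0..<k} (\<lambda>_. M))" "graphon_tensor k EF (graphon_rep V E P) x \<noteq> 0"
      using that unfolding hom_set_graphon_def by auto
    have "(\<Sum>i<k. step_function V P c (x i)) = (\<Sum>i<k. c ((\<lambda>i\<in>{0..<k}. vertex_of V P (x i)) i))"
      using x(1) at_point by (intro sum.cong) (auto simp: space_PiM PiE_iff)
    also have "\<dots> \<ge> 1"
      using cover hom_tuple_vertex_of[OF assms(1-3) x] unfolding is_frac_cover_graph_def by blast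
    finally show ?thesis .
  qed
  then have "hom_set_graphon M k EF (graphon_rep V E P)
      \<inter> {x \<in> space (PiM {0..<k} (\<lambda>_. M)). (\<Sum>i<k. step_function V P c (x i)) < 1} = {}"
    by (metis (no_types, lifting) Int_emptyI mem_Collect_eq not_less)
  moreover have "step_function V P c \<in> borel_measurable M"
    unfolding step_function_def using P(1) by measurable
  moreover have "0 \<le> step_function V P c x \<and> step_function V P c x \<le> 1" if "x \<in> space M" for x
    using at_point[OF that] vertex_of_mem(1)[OF assms(3) that] cover
    unfolding is_frac_cover_graph_def by simp
  ultimately show ?thesis
    unfolding is_frac_cover_graphon_def by (simp del: Int_iff)
qed

lemma integrable_frac_cover_graphon:
  assumes "prob_space M" "is_frac_cover_graphon M k EF W c"
  shows "integrable M c"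
proof -
  interpret prob_space M by fact
  show ?thesis
    using assms(2) unfolding is_frac_cover_graphon_def
    by (intro integrable_const_bound[where B=1]) auto
qed

lemma frac_cover_graph_cell_average:
  assumes "prob_space M" "is_vertex_partition M V P" "finite V"
    and cover: "is_frac_cover_graphon M k EF (graphon_rep V E P) c"
  shows "is_frac_cover_graph k EF V E (cell_average M P c)"
proof -
  interpret prob_space M by fact
  note P = vertex_partitionD[OF assms(2)]
  have c: "c \<in> borel_measurable M" "\<And>x. x \<in> space M \<Longrightarrow> 0 \<le> c x \<and> c x \<le> 1"
    using cover unfolding is_frac_cover_graphon_def by auto
  have c_int: "integrable M c"
    using integrable_frac_cover_graphon[OF assms(1) cover] .
  have "(\<Sum>i<k. cell_average M P c (u i)) \<ge> 1" if u: "u \<in> hom_tuples k EF V E" for u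
  proof -
    have uV: "u i \<in> V" if "i < k" for i using u that unfolding hom_tuples_def by auto
    define A where "A i = {x \<in> P (u i). c x \<le> cell_average M P c (u i)}" for i
    have A: "A i \<in> sets M" "emeasure M (A i) \<noteq> 0" if "i \<in> {0..<k}" for i
    proof -
      have ui: "u i \<in> V" using uV that by simp
      have "emeasure M (P (u i)) \<noteq> 0"
        using P(2) ui card_vertex_partition_pos[OF assms(1-3)]
        by (simp add: emeasure_eq_measure)
      then show "emeasure M (A i) \<noteq> 0"
        unfolding A_def cell_average_def using c_int P(1) ui
        by (intro emeasure_le_set_average_nonzero) auto
      show "A i \<in> sets M" unfolding A_def using c(1) P(1) ui by measurable
    qed
    let ?bad = "hom_set_graphon M k EF (graphon_rep V E P)
      \<inter> {x \<in> space (PiM {0..<k} (\<lambda>_. M)). (\<Sum>i<k. c (x i)) < 1}"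
    have box: "PiE {0..<k} A \<in> sets (PiM {0..<k} (\<lambda>_. M))"
      using A(1) by (intro sets_PiM_I_finite) auto
    have "PiE {0..<k} A \<notin> null_sets (PiM {0..<k} (\<lambda>_. M))"
      using A(2) box by (intro PiE_not_null_sets prob_space_imp_sigma_finite assms(1) A(1)) auto
    moreover have "?bad \<in> null_sets (PiM {0..<k} (\<lambda>_. M))"
      using cover unfolding is_frac_cover_graphon_def by blast
    ultimately have "\<not> PiE {0..<k} A \<subseteq> ?bad"
      using box null_sets_subset by blast
    then obtain x where x: "x \<in> PiE {0..<k} A" and not_bad: "x \<notin> ?bad"
      by blast
    have "x \<in> space (PiM {0..<k} (\<lambda>_. M))"
      using box x sets.sets_into_space by blast
    moreover have "graphon_tensor k EF (graphon_rep V E P) x = 1"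
      using x by (intro graphon_tensor_graphon_rep_eq_1[OF u]) (auto simp: A_def)
    ultimately have "1 \<le> (\<Sum>i<k. c (x i))"
      using not_bad unfolding hom_set_graphon_def by auto
    also have "\<dots> \<le> (\<Sum>i<k. cell_average M P c (u i))"
      using x by (intro sum_mono) (auto simp: A_def)
    finally show ?thesis .
  qed
  moreover have "0 \<le> cell_average M P c v \<and> cell_average M P c v \<le> 1" if "v \<in> V" for v
    unfolding cell_average_def using c P(1) that by (intro set_average_bounds) auto
  ultimately show ?thesis unfolding is_frac_cover_graph_def by blast
qed

theorem proposition3p13:
  fixes M :: "'a::polish_space measure" and k :: nat and EF :: "nat \<Rightarrow> nat \<Rightarrow> bool"
    and V :: "'v set" and E :: "'v \<Rightarrow> 'v \<Rightarrow> bool" and P :: "'v \<Rightarrow> 'a set"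
  assumes "sets M = sets borel" and "prob_space M" and "atomless M"
    and "simple_graph {0..<k} EF"
    and "simple_graph V E"
    and "is_vertex_partition M V P"
  shows "fcov_graph k EF V E = ereal (real (card V)) * fcov_graphon M k EF (graphon_rep V E P)"
proof -
  have fin: "finite V" using assms(5) by (simp add: simple_graph_def)
  let ?cover = "is_frac_cover_graphon M k EF (graphon_rep V E P)"
  let ?Q = "\<lambda>y. \<exists>c. y = ereal (integral\<^sup>L M c) \<and> ?cover c"
  have sizes: "{ereal (\<Sum>v\<in>V. c v) | c. is_frac_cover_graph k EF V E c}
      = {ereal (real (card V)) * y | y. ?Q y}"
  proof (intro set_eqI iffI; elim CollectE exE conjE)
    fix y c assume "y = ereal (\<Sum>v\<in>V. c v)" "is_frac_cover_graph k EF V E c"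
    then show "y \<in> {ereal (real (card V)) * y | y. ?Q y}"
      using frac_cover_graphon_step_function[OF assms(4-6)]
        card_mult_integral_step_function[OF assms(2,6) fin]
      by (intro CollectI exI[of _ "ereal (integral\<^sup>L M (step_function V P c))"]) auto
  next
    fix y y' c assume "y = ereal (real (card V)) * y'" "y' = ereal (integral\<^sup>L M c)" "?cover c"
    then show "y \<in> {ereal (\<Sum>v\<in>V. c v) | c. is_frac_cover_graph k EF V E c}"
      using frac_cover_graph_cell_average[OF assms(2,6) fin]
        sum_cell_average_vertex_partition[OF assms(2,6) fin integrable_frac_cover_graphon[OF assms(2)]]
      by (intro CollectI exI[of _ "cell_average M P c"]) auto
  qed
  have "fcov_graphon M k EF (graphon_rep V E P) = Inf {y. ?Q y}"
    unfolding fcov_graphon_def by (intro arg_cong[where f=Inf]) auto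
  moreover have "real (card V) > 0" using card_vertex_partition_pos[OF assms(2,6) fin] by simp
  ultimately show ?thesis
    unfolding fcov_graph_def sizes using ereal_Inf_cmult[where P="?Q"] by simp
qed

end
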